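(* Let $\mathcal L_0$ be a sufficiently large constant such that for every $\mathcal L\ge\mathcal L_0$ the number of primes in $[\sqrt{\mathcal L},\sqrt{2\mathcal L}]$ exceeds $\frac{\sqrt{\mathcal L}}{2\log\mathcal L}$. Then for any $\mathcal L\ge\mathcal L_0$, any $M,N>0$ and any real $t$, $$S^\flat(M,N,t)\ll\frac{\log\mathcal L}{\sqrt{\mathcal L}}\left(S(M\mathcal L,N,t)+S(2M\mathcal L,N,t)+\sum_{\substack{\sqrt{\mathcal L}\le p\le\sqrt{2\mathcal L}\\ p\text{ prime}}}\frac{S^\flat(M,N/p,t)}{p^2}\right),$$ where the implied constant is absolute (in particular independent of $\mathcal L$).
   Context: For a nonzero integer $m$, $\chi_m(n)=\left(\frac mn\right)$ denotes the Kronecker symbol. $G$ is a fixed smooth non-negative function supported in $[3/4,2]$ such that for every integer $J\ge0$, $G(x)+G(x/2)+\dots+G(x/2^J)$ equals $1$ on $[1,3\cdot2^{J-1}]$ and is supported on $[3/4,2^{J+1}]$. Define $$S(M,N,t)=\sum_{\substack{M\le|m|<2M\\ m\text{ not a perfect square}}}\left|\sum_{n\ge1}\frac{\chi_m(n)}{n^{\frac12+it}}G\!\left(\frac nN\right)\right|^4,\qquad S^\flat(M,N,t)=\sum_{\substack{M\le|m|<2M\\ m\text{ fundamental discriminant}}}\left|\sum_{n\ge1}\frac{\chi_m(n)}{n^{\frac12+it}}G\!\left(\frac nN\right)\right|^4.$$ *)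

theory Defs
  imports "HOL-Analysis.Analysis" "HOL-Number_Theory.Number_Theory" "HOL-Computational_Algebra.Squarefree"
begin

definition kron_prime :: "int \<Rightarrow> nat \<Rightarrow> int" where
  "kron_prime m p =
     (if p = 2 then (if even m then 0 else if m mod 8 = 1 \<or> m mod 8 = 7 then 1 else -1)
      else Legendre m (int p))"

definition kronecker :: "int \<Rightarrow> nat \<Rightarrow> int" where
  "kronecker m n = (\<Prod>p\<in>prime_factors n. kron_prime m p ^ multiplicity p n)"

definition is_square_int :: "int \<Rightarrow> bool" where
  "is_square_int m \<longleftrightarrow> (\<exists>k::int. m = k ^ 2)"

definition fund_disc :: "int \<Rightarrow> bool" where
  "fund_disc m \<longleftrightarrow> m \<noteq> 1 \<and>
     ((m mod 4 = 1 \<and> squarefree m) \<or>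
      (\<exists>k. m = 4 * k \<and> (k mod 4 = 2 \<or> k mod 4 = 3) \<and> squarefree k))"

definition smooth_fun :: "(real \<Rightarrow> real) \<Rightarrow> bool" where
  "smooth_fun G \<longleftrightarrow> (\<exists>f::nat \<Rightarrow> real \<Rightarrow> real. f 0 = G \<and>
     (\<forall>k x. (f k has_real_derivative f (Suc k) x) (at x)))"

definition admissible_G :: "(real \<Rightarrow> real) \<Rightarrow> bool" where
  "admissible_G G \<longleftrightarrow> smooth_fun G \<and> (\<forall>x. G x \<ge> 0) \<and>
     (\<forall>x. x \<notin> {3/4..2} \<longrightarrow> G x = 0) \<and>
     (\<forall>J::nat. (\<forall>x\<in>{1..3 * 2 powr (real J - 1)}. (\<Sum>j\<le>J. G (x / 2 ^ j)) = 1) \<and>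
               (\<forall>x. x \<notin> {3/4..2 ^ (J+1)} \<longrightarrow> (\<Sum>j\<le>J. G (x / 2 ^ j)) = 0))"

definition dpoly :: "(real \<Rightarrow> real) \<Rightarrow> int \<Rightarrow> real \<Rightarrow> real \<Rightarrow> complex" where
  "dpoly G m N t = (\<Sum>\<^sub>\<infinity>n\<in>{1::nat..}.
      of_int (kronecker m n) / (of_nat n) powr (Complex (1/2) t) * of_real (G (real n / N)))"

definition S_all :: "(real \<Rightarrow> real) \<Rightarrow> real \<Rightarrow> real \<Rightarrow> real \<Rightarrow> real" where
  "S_all G M N t = (\<Sum>m\<in>{m::int. M \<le> real_of_int \<bar>m\<bar> \<and> real_of_int \<bar>m\<bar> < 2 * M \<and> \<not> is_square_int m}.
      norm (dpoly G m N t) ^ 4)"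

definition S_flat :: "(real \<Rightarrow> real) \<Rightarrow> real \<Rightarrow> real \<Rightarrow> real \<Rightarrow> real" where
  "S_flat G M N t = (\<Sum>m\<in>{m::int. M \<le> real_of_int \<bar>m\<bar> \<and> real_of_int \<bar>m\<bar> < 2 * M \<and> fund_disc m}.
      norm (dpoly G m N t) ^ 4)"

end

theory Submission
  imports Defs
begin

text \<open>
  For a prime \<open>p\<close>, the character of \<open>m p\<^sup>2\<close> agrees with \<open>\<chi>\<^sub>m\<close> away from the multiples of
  \<open>p\<close> and vanishes on them. By complete multiplicativity the Dirichlet polynomial therefore
  splits as \<open>D(m, N) = D(m p\<^sup>2, N) + \<chi>\<^sub>m(p) p\<^sup>-\<^sup>s D(m, N/p)\<close>, and
  \<open>|a + b|\<^sup>4 \<le> 8 (|a|\<^sup>4 + |b|\<^sup>4)\<close> gives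
  \<open>|D(m, N)|\<^sup>4 \<le> 8 |D(m p\<^sup>2, N)|\<^sup>4 + 8 p\<^sup>-\<^sup>2 |D(m, N/p)|\<^sup>4\<close>.
  Average this over the primes \<open>p\<close> with \<open>L \<le> p\<^sup>2 \<le> 2L\<close>. Since no odd prime square divides a
  fundamental discriminant, the numbers \<open>m p\<^sup>2\<close> are pairwise distinct; they are non-squares with
  \<open>ML \<le> |m p\<^sup>2| < 4ML\<close>, so the first terms add up to at most \<open>S(ML) + S(2ML)\<close>. Dividing by
  the number of primes, which exceeds \<open>\<surd>L / (2 log L)\<close>, gives the bound with constant 16.
\<close>

section \<open>The Kronecker symbol\<close>

lemma Legendre_mult_square_coprime:
  fixes a b q :: int
  assumes "coprime b q"
  shows "Legendre (a * b ^ 2) q = Legendre a q"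
proof -
  have zero_iff: "[a * b ^ 2 = 0] (mod q) \<longleftrightarrow> [a = 0] (mod q)"
    using assms by (simp add: cong_0_iff coprime_commute coprime_dvd_mult_left_iff)
  obtain u where u: "[b * u = 1] (mod q)"
    using cong_solve_coprime_int[OF assms] by blast
  have "QuadRes q (a * b ^ 2) \<longleftrightarrow> QuadRes q a"
  proof
    assume "QuadRes q (a * b ^ 2)"
    then obtain y where y: "[y ^ 2 = a * b ^ 2] (mod q)" by (auto simp: QuadRes_def)
    have "[(y * u) ^ 2 = a * (b * u) ^ 2] (mod q)"
      using cong_mult[OF y cong_refl[of "u ^ 2"]] by (simp add: algebra_simps)
    also have "[a * (b * u) ^ 2 = a * 1 ^ 2] (mod q)"
      by (intro cong_mult cong_refl cong_pow u)
    finally show "QuadRes q a" by (auto simp: QuadRes_def)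
  next
    assume "QuadRes q a"
    then obtain y where "[y ^ 2 = a] (mod q)" by (auto simp: QuadRes_def)
    then have "[(y * b) ^ 2 = a * b ^ 2] (mod q)"
      by (simp add: power_mult_distrib cong_mult)
    then show "QuadRes q (a * b ^ 2)" by (auto simp: QuadRes_def)
  qed
  with zero_iff show ?thesis
    by (simp add: Legendre_def)
qed

lemma odd_square_cong_1_mod_8:
  fixes b :: int
  assumes "odd b"
  shows "[b ^ 2 = 1] (mod 8)"
proof -
  obtain k where b: "b = 2 * k + 1" using assms oddE by blast
  have "even (k * (k + 1))" by simp
  then obtain j where "k * (k + 1) = 2 * j" by (rule evenE)
  with b have "b ^ 2 - 1 = 8 * j"
    by (simp add: power2_eq_square algebra_simps)
  then show ?thesis
    by (simp add: cong_iff_dvd_diff)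
qed

lemma kron_prime_mult_square:
  fixes b :: int
  assumes q: "prime q"
  shows "kron_prime (a * b ^ 2) q = (if int q dvd b then 0 else kron_prime a q)"
proof (cases "q = 2")
  case True
  show ?thesis
  proof (cases "even b")
    case False
    then have "[a * b ^ 2 = a * 1] (mod 8)"
      by (intro cong_mult cong_refl odd_square_cong_1_mod_8)
    with False True show ?thesis
      by (simp add: kron_prime_def cong_def)
  qed (use True in \<open>auto simp: kron_prime_def\<close>)
next
  case False
  show ?thesis
  proof (cases "int q dvd b")
    case True
    then have "[a * b ^ 2 = 0] (mod int q)"
      by (simp add: cong_0_iff power2_eq_square)
    with True False show ?thesis
      by (simp add: kron_prime_def Legendre_def)
  next
    case not_dvd: False
    have "coprime (int q) b"
      using q not_dvd by (intro prime_imp_coprime) simp_all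
    then have "coprime b (int q)"
      by (rule coprime_commute[THEN iffD1])
    with False not_dvd show ?thesis
      by (simp add: kron_prime_def Legendre_mult_square_coprime)
  qed
qed

lemma kron_prime_abs_le: "\<bar>kron_prime m q\<bar> \<le> 1"
  by (simp add: kron_prime_def Legendre_def)

lemma kronecker_eq_prod_mset:
  "kronecker m n = prod_mset (image_mset (kron_prime m) (prime_factorization n))"
  unfolding kronecker_def image_prod_mset_multiplicity
  by (intro prod.cong refl) (simp add: count_prime_factorization_prime in_prime_factors_imp_prime)

lemma kronecker_mult:
  assumes "a \<noteq> 0" "b \<noteq> 0"
  shows "kronecker m (a * b) = kronecker m a * kronecker m b"
  using assms by (simp add: kronecker_eq_prod_mset prime_factorization_mult)

lemma kronecker_mult_prime_square:
  assumes p: "prime p" and "n \<noteq> 0"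
  shows "kronecker (m * int p ^ 2) n = (if p dvd n then 0 else kronecker m n)"
proof -
  have factor: "kron_prime (m * int p ^ 2) q = (if q = p then 0 else kron_prime m q)"
    if "q \<in> prime_factors n" for q
    using that p by (auto simp: kron_prime_mult_square in_prime_factors_iff primes_dvd_imp_eq)
  show ?thesis
  proof (cases "p dvd n")
    case True
    then have "p \<in> prime_factors n"
      using p \<open>n \<noteq> 0\<close> by (simp add: in_prime_factors_iff)
    then show ?thesis
      using True factor by (force simp: kronecker_eq_prod_mset)
  next
    case False
    then have "q \<noteq> p" if "q \<in> prime_factors n" for q
      using that by (auto simp: in_prime_factors_iff)
    then show ?thesis
      using False factor by (simp add: kronecker_eq_prod_mset cong: image_mset_cong)
  qed
qed

lemma kronecker_abs_le: "\<bar>kronecker m n\<bar> \<le> 1"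
  unfolding kronecker_def abs_prod
  by (intro prod_le_1) (auto simp: power_abs intro: power_le_one kron_prime_abs_le)

section \<open>Fundamental discriminants\<close>

lemma is_square_int_mult_square_iff:
  fixes a b :: int
  assumes "b \<noteq> 0"
  shows "is_square_int (a * b ^ 2) \<longleftrightarrow> is_square_int a"
proof
  assume "is_square_int (a * b ^ 2)"
  then obtain k where k: "a * b ^ 2 = k ^ 2"
    by (auto simp: is_square_int_def)
  then have "b ^ 2 dvd k ^ 2"
    by (metis dvd_triv_right)
  then obtain j where "k = b * j"
    by auto
  with k assms have "a = j ^ 2"
    by (simp add: power_mult_distrib)
  then show "is_square_int a"
    by (auto simp: is_square_int_def)
next
  assume "is_square_int a"
  then show "is_square_int (a * b ^ 2)"
    by (auto simp: is_square_int_def power_mult_distrib[symmetric])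
qed

lemma squarefree_square_int_eq_1:
  fixes i :: int
  assumes "squarefree (i ^ 2)"
  shows "i ^ 2 = 1"
proof -
  have "i dvd 1"
    using assms by (rule squarefreeD) simp
  then show ?thesis
    by (metis power2_abs zdvd1_eq one_power2)
qed

lemma fund_disc_not_square:
  assumes "fund_disc m"
  shows "\<not> is_square_int m"
proof
  assume "is_square_int m"
  then obtain j where j: "m = j ^ 2"
    by (auto simp: is_square_int_def)
  from assms consider "m \<noteq> 1" "squarefree m"
    | k where "m = 4 * k" "k mod 4 = 2 \<or> k mod 4 = 3" "squarefree k"
    unfolding fund_disc_def by blast
  then show False
  proof cases
    case 1
    with j show False
      using squarefree_square_int_eq_1[of j] by simp
  next
    case (2 k)
    have "even (j ^ 2)"
      unfolding j[symmetric] 2(1) by simp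
    then obtain i where "j = 2 * i"
      by (auto elim: evenE)
    with j 2 have "k = i ^ 2"
      by (simp add: power_mult_distrib)
    with 2 have "k = 1"
      using squarefree_square_int_eq_1[of i] by simp
    with 2 show False
      by simp
  qed
qed

lemma fund_disc_prime_square_dvd_imp_2:
  assumes "fund_disc m" and p: "prime p" and dvd: "int p ^ 2 dvd m"
  shows "p = 2"
proof (rule ccontr)
  assume "p \<noteq> 2"
  then have "odd p"
    using prime_ge_2_nat[OF p] prime_odd_nat[OF p] by linarith
  then have "coprime (int p) 2"
    by simp
  then have coprime_4: "coprime (int p ^ 2) (2 ^ 2)"
    by (metis coprime_power_left_iff coprime_power_right_iff)
  have not_unit: "\<not> int p dvd 1"
    using prime_gt_1_nat[OF p] by simp
  from assms consider "squarefree m" | k where "m = 4 * k" "squarefree k"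
    unfolding fund_disc_def by blast
  then show False
  proof cases
    case 1
    with dvd not_unit show False
      using squarefreeD by blast
  next
    case (2 k)
    with dvd have "int p ^ 2 dvd 2 ^ 2 * k"
      by simp
    with coprime_4 have "int p ^ 2 dvd k"
      by (rule coprime_dvd_mult_right_iff[THEN iffD1])
    with 2 not_unit show False
      using squarefreeD by blast
  qed
qed

lemma inj_on_fund_disc_mult_prime_square:
  "inj_on (\<lambda>(m, p). m * int p ^ 2) ({m. fund_disc m} \<times> {p. prime p})"
proof (rule inj_onI, clarify)
  fix m m' :: int and p p' :: nat
  assume f: "fund_disc m" "fund_disc m'" and p: "prime p" "prime p'"
    and eq: "m * int p ^ 2 = m' * int p' ^ 2"
  show "m = m' \<and> p = p'"
  proof (cases "p = p'")
    case True
    with eq p show ?thesis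
      by simp
  next
    case False
    then have "coprime (int p ^ 2) (int p' ^ 2)"
      using p by (simp add: primes_coprime)
    moreover have "int p ^ 2 dvd m' * int p' ^ 2"
      unfolding eq[symmetric] by simp
    moreover have "int p' ^ 2 dvd m * int p ^ 2"
      unfolding eq by simp
    ultimately have "int p ^ 2 dvd m'" "int p' ^ 2 dvd m"
      by (simp_all add: coprime_dvd_mult_left_iff coprime_commute)
    then have "p = 2" "p' = 2"
      using fund_disc_prime_square_dvd_imp_2 f p by blast+
    with False show ?thesis
      by simp
  qed
qed

section \<open>Removing a prime square from the Dirichlet polynomial\<close>

lemma norm_add_pow4_le:
  fixes a b :: "'a::real_normed_vector"
  shows "norm (a + b) ^ 4 \<le> 8 * (norm a ^ 4 + norm b ^ 4)"
proof -
  define x y where "x = norm a" and "y = norm b"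
  have "norm (a + b) ^ 4 \<le> (x + y) ^ 4"
    unfolding x_def y_def by (intro power_mono norm_triangle_ineq) auto
  also have "\<dots> = 8 * (x ^ 4 + y ^ 4) - (x - y) ^ 2 * (7 * x ^ 2 + 10 * x * y + 7 * y ^ 2)"
    by (simp add: power2_eq_square power4_eq_xxxx algebra_simps)
  also have "\<dots> \<le> 8 * (x ^ 4 + y ^ 4)"
    unfolding x_def y_def by simp
  finally show ?thesis
    unfolding x_def y_def .
qed

definition dpoly_term :: "(real \<Rightarrow> real) \<Rightarrow> int \<Rightarrow> real \<Rightarrow> real \<Rightarrow> nat \<Rightarrow> complex" where
  "dpoly_term G m N t n =
     of_int (kronecker m n) / of_nat n powr Complex (1/2) t * of_real (G (real n / N))"

lemma dpoly_eq_sum: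
  assumes G: "\<And>x. x > B \<Longrightarrow> G x = 0" and N: "N > 0" and K: "B * N \<le> real K"
  shows "dpoly G m N t = (\<Sum>n=1..K. dpoly_term G m N t n)"
proof -
  have "dpoly G m N t = infsum (dpoly_term G m N t) {1..}"
    unfolding dpoly_def dpoly_term_def ..
  also have "\<dots> = infsum (dpoly_term G m N t) {1..K}"
  proof (rule infsum_cong_neutral)
    fix n assume "n \<in> {1..} - {1..K}"
    with K N have "real n / N > B"
      by (auto simp: field_simps)
    then show "dpoly_term G m N t n = 0"
      by (simp add: dpoly_term_def G)
  qed auto
  finally show ?thesis
    by simp
qed

lemma sum_multiples:
  fixes f :: "nat \<Rightarrow> 'a::comm_monoid_add"
  assumes "p > 0"
  shows "(\<Sum>n=1..p * K. if p dvd n then f n else 0) = (\<Sum>k=1..K. f (p * k))"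
proof -
  have "{n \<in> {1..p * K}. p dvd n} = (*) p ` {1..K}"
    using assms by (auto elim!: dvdE intro!: image_eqI simp: Suc_le_eq)
  moreover have "inj_on ((*) p) {1..K}"
    using assms by (simp add: inj_on_def)
  ultimately show ?thesis
    by (simp add: sum.inter_filter[symmetric] sum.reindex)
qed

lemma dpoly_split_prime:
  assumes G: "\<And>x. x > B \<Longrightarrow> G x = 0" and N: "N > 0" and p: "prime p"
  shows "dpoly G m N t = dpoly G (m * int p ^ 2) N t
           + of_int (kronecker m p) / of_nat p powr Complex (1/2) t * dpoly G m (N / real p) t"
    (is "_ = _ + ?c * _")
proof -
  define K where "K = nat \<lceil>\<bar>B\<bar> * N\<rceil>"
  have p0: "p > 0"
    using p by (simp add: prime_gt_0_nat)
  have "B * (N / p) \<le> \<bar>B\<bar> * (N / p)"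
    using N by (intro mult_right_mono) auto
  also have "\<dots> \<le> \<bar>B\<bar> * N"
    using N p0 by (intro mult_left_mono) (auto simp: divide_le_eq)
  moreover have "B * N \<le> \<bar>B\<bar> * N"
    using N by (intro mult_right_mono) auto
  moreover have "K \<le> p * K"
    using p0 by simp
  moreover have "\<bar>B\<bar> * N \<le> real K"
    unfolding K_def by linarith
  ultimately have K: "B * N \<le> real (p * K)" and K': "B * (N / p) \<le> real K"
    by linarith+
  have split: "dpoly_term G m N t n
      = dpoly_term G (m * int p ^ 2) N t n + (if p dvd n then dpoly_term G m N t n else 0)"
    if "n \<in> {1..p * K}" for n
  proof -
    have "kronecker (m * int p ^ 2) n = (if p dvd n then 0 else kronecker m n)"
      using that by (intro kronecker_mult_prime_square p) simp
    then show ?thesis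
      by (cases "p dvd n") (simp_all add: dpoly_term_def)
  qed
  have multiple: "dpoly_term G m N t (p * k) = ?c * dpoly_term G m (N / p) t k"
    if "k \<in> {1..K}" for k
  proof -
    have "kronecker m (p * k) = kronecker m p * kronecker m k"
      using that p0 by (intro kronecker_mult) simp_all
    moreover have "of_nat (p * k) powr Complex (1/2) t
        = of_nat p powr Complex (1/2) t * of_nat k powr Complex (1/2) t"
      by (simp only: of_nat_mult) (rule powr_times_real_left; auto)
    moreover have "real (p * k) / N = real k / (N / p)"
      using p0 by (simp add: field_simps)
    ultimately show ?thesis
      by (simp add: dpoly_term_def mult_ac)
  qed
  have "dpoly G m N t = (\<Sum>n=1..p * K. dpoly_term G m N t n)"
    by (rule dpoly_eq_sum[OF G N K])
  also have "\<dots> = (\<Sum>n=1..p * K. dpoly_term G (m * int p ^ 2) N t n)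
      + (\<Sum>n=1..p * K. if p dvd n then dpoly_term G m N t n else 0)"
    unfolding sum.distrib[symmetric] by (intro sum.cong refl split)
  also have "(\<Sum>n=1..p * K. dpoly_term G (m * int p ^ 2) N t n) = dpoly G (m * int p ^ 2) N t"
    by (rule dpoly_eq_sum[OF G N K, symmetric])
  also have "(\<Sum>n=1..p * K. if p dvd n then dpoly_term G m N t n else 0)
      = (\<Sum>k=1..K. ?c * dpoly_term G m (N / p) t k)"
    unfolding sum_multiples[OF p0] by (intro sum.cong refl multiple)
  also have "\<dots> = ?c * dpoly G m (N / p) t"
    using N p0 by (simp add: dpoly_eq_sum[OF G _ K'] sum_distrib_left)
  finally show ?thesis .
qed

lemma norm_kronecker_div_powr_le:
  assumes "n > 0"
  shows "norm (of_int (kronecker m n) / of_nat n powr Complex (1/2) t) \<le> 1 / sqrt (real n)"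
proof -
  have "norm ((of_nat n :: complex) powr Complex (1/2) t) = sqrt (real n)"
    using assms by (subst norm_powr_real_powr) (auto simp: powr_half_sqrt)
  moreover have "norm (of_int (kronecker m n) :: complex) \<le> 1"
    using kronecker_abs_le[of m n] by (simp only: norm_of_int)
  ultimately show ?thesis
    using assms by (simp add: norm_divide divide_right_mono)
qed

lemma norm_dpoly_pow4_le:
  assumes G: "\<And>x. x > B \<Longrightarrow> G x = 0" and N: "N > 0" and p: "prime p"
  shows "norm (dpoly G m N t) ^ 4
    \<le> 8 * norm (dpoly G (m * int p ^ 2) N t) ^ 4 + 8 * (norm (dpoly G m (N / p) t) ^ 4 / real p ^ 2)"
proof -
  define c where "c = of_int (kronecker m p) / of_nat p powr Complex (1/2) t"
  have p0: "p > 0"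
    using p by (simp add: prime_gt_0_nat)
  have "norm c ^ 4 \<le> (1 / sqrt (real p)) ^ 4"
    unfolding c_def by (intro power_mono norm_kronecker_div_powr_le p0) simp
  also have "\<dots> = 1 / real p ^ 2"
    by (simp add: power_divide power4_eq_xxxx power2_eq_square)
  finally have c: "norm c ^ 4 \<le> 1 / real p ^ 2" .
  have split: "dpoly G m N t = dpoly G (m * int p ^ 2) N t + c * dpoly G m (N / p) t"
    unfolding c_def by (rule dpoly_split_prime[OF G N p])
  have "norm (dpoly G m N t) ^ 4
      \<le> 8 * (norm (dpoly G (m * int p ^ 2) N t) ^ 4 + norm (c * dpoly G m (N / p) t) ^ 4)"
    unfolding split by (rule norm_add_pow4_le)
  also have "norm (c * dpoly G m (N / p) t) ^ 4 = norm c ^ 4 * norm (dpoly G m (N / p) t) ^ 4"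
    by (simp add: norm_mult power_mult_distrib)
  also have "\<dots> \<le> norm (dpoly G m (N / p) t) ^ 4 / real p ^ 2"
    using mult_right_mono[OF c, of "norm (dpoly G m (N / p) t) ^ 4"] by simp
  finally show ?thesis
    by (simp add: algebra_simps)
qed

section \<open>Averaging over primes\<close>

definition dyadic_fund_discs :: "real \<Rightarrow> int set" where
  "dyadic_fund_discs M = {m. M \<le> real_of_int \<bar>m\<bar> \<and> real_of_int \<bar>m\<bar> < 2 * M \<and> fund_disc m}"

definition dyadic_nonsquares :: "real \<Rightarrow> int set" where
  "dyadic_nonsquares M = {m. M \<le> real_of_int \<bar>m\<bar> \<and> real_of_int \<bar>m\<bar> < 2 * M \<and> \<not> is_square_int m}"

lemma S_flat_eq_sum: "S_flat G M N t = (\<Sum>m\<in>dyadic_fund_discs M. norm (dpoly G m N t) ^ 4)"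
  by (simp add: S_flat_def dyadic_fund_discs_def)

lemma S_all_eq_sum: "S_all G M N t = (\<Sum>m\<in>dyadic_nonsquares M. norm (dpoly G m N t) ^ 4)"
  by (simp add: S_all_def dyadic_nonsquares_def)

lemma finite_int_abs_less: "finite {m::int. real_of_int \<bar>m\<bar> < c}"
proof (rule finite_subset)
  show "{m::int. real_of_int \<bar>m\<bar> < c} \<subseteq> {-\<lceil>c\<rceil>..\<lceil>c\<rceil>}"
    by (auto; linarith)
qed simp

lemma finite_dyadic_nonsquares: "finite (dyadic_nonsquares M)"
  by (rule finite_subset[OF _ finite_int_abs_less[of "2 * M"]]) (auto simp: dyadic_nonsquares_def)

lemma mult_prime_square_mem_dyadic_nonsquares:
  assumes m: "m \<in> dyadic_fund_discs M" and p: "prime p"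
    and L: "L \<le> real p ^ 2" "real p ^ 2 \<le> 2 * L" and "M \<ge> 0"
  shows "m * int p ^ 2 \<in> dyadic_nonsquares (M * L) \<union> dyadic_nonsquares (2 * M * L)"
proof -
  have "fund_disc m" and M: "M \<le> real_of_int \<bar>m\<bar>" "real_of_int \<bar>m\<bar> < 2 * M"
    using m by (auto simp: dyadic_fund_discs_def)
  have p_pos: "real p ^ 2 > 0"
    using p by (simp add: prime_gt_0_nat)
  have "\<not> is_square_int (m * int p ^ 2)"
    using \<open>fund_disc m\<close> p fund_disc_not_square by (simp add: is_square_int_mult_square_iff)
  moreover have "real_of_int \<bar>m * int p ^ 2\<bar> = real_of_int \<bar>m\<bar> * real p ^ 2"
    by (simp add: abs_mult)
  moreover have "M * L \<le> real_of_int \<bar>m\<bar> * real p ^ 2"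
    using M L \<open>M \<ge> 0\<close> by (intro mult_mono) auto
  moreover have "real_of_int \<bar>m\<bar> * real p ^ 2 < 2 * M * real p ^ 2"
    using M p_pos by simp
  moreover have "2 * M * real p ^ 2 \<le> 2 * (2 * M * L)"
    using mult_left_mono[OF L(2) \<open>M \<ge> 0\<close>] by (simp add: algebra_simps)
  ultimately show ?thesis
    by (auto simp: dyadic_nonsquares_def algebra_simps)
qed

lemma sum_dyadic_fund_discs_mult_prime_square_le:
  fixes f :: "int \<Rightarrow> real"
  assumes f: "\<And>m. f m \<ge> 0" and "finite P"
    and P: "\<And>p. p \<in> P \<Longrightarrow> prime p \<and> L \<le> real p ^ 2 \<and> real p ^ 2 \<le> 2 * L" and "M \<ge> 0"
  shows "(\<Sum>m\<in>dyadic_fund_discs M. \<Sum>p\<in>P. f (m * int p ^ 2))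
    \<le> (\<Sum>m\<in>dyadic_nonsquares (M * L). f m) + (\<Sum>m\<in>dyadic_nonsquares (2 * M * L). f m)"
proof -
  define g where "g = (\<lambda>(m, p). m * int p ^ 2)"
  have inj: "inj_on g (dyadic_fund_discs M \<times> P)"
    unfolding g_def by (rule inj_on_subset[OF inj_on_fund_disc_mult_prime_square])
      (use P in \<open>auto simp: dyadic_fund_discs_def\<close>)
  have "g (m, p) \<in> dyadic_nonsquares (M * L) \<union> dyadic_nonsquares (2 * M * L)"
    if "m \<in> dyadic_fund_discs M" "p \<in> P" for m p
    unfolding g_def prod.case
    by (rule mult_prime_square_mem_dyadic_nonsquares) (use that P \<open>M \<ge> 0\<close> in auto)
  then have image: "g ` (dyadic_fund_discs M \<times> P) \<subseteq> dyadic_nonsquares (M * L) \<union> dyadic_nonsquares (2 * M * L)"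
    by auto
  have "(\<Sum>m\<in>dyadic_fund_discs M. \<Sum>p\<in>P. f (m * int p ^ 2)) = (\<Sum>x\<in>dyadic_fund_discs M \<times> P. f (g x))"
    by (simp add: sum.cartesian_product g_def case_prod_beta)
  also have "\<dots> = (\<Sum>n\<in>g ` (dyadic_fund_discs M \<times> P). f n)"
    by (rule sum.reindex[OF inj, symmetric, unfolded comp_def])
  also have "\<dots>
      \<le> (\<Sum>n\<in>dyadic_nonsquares (M * L) \<union> dyadic_nonsquares (2 * M * L). f n)"
    using image by (intro sum_mono2 f) (auto simp: finite_dyadic_nonsquares)
  also have "\<dots> = (\<Sum>m\<in>dyadic_nonsquares (M * L). f m) + (\<Sum>m\<in>dyadic_nonsquares (2 * M * L). f m)"
    by (rule sum.union_disjoint[OF finite_dyadic_nonsquares finite_dyadic_nonsquares])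
      (auto simp: dyadic_nonsquares_def)
  finally show ?thesis .
qed

lemma card_mult_S_flat_le:
  assumes G: "\<And>x. x > B \<Longrightarrow> G x = 0" and N: "N > 0" and "M \<ge> 0" and "finite P"
    and P: "\<And>p. p \<in> P \<Longrightarrow> prime p \<and> L \<le> real p ^ 2 \<and> real p ^ 2 \<le> 2 * L"
  shows "real (card P) * S_flat G M N t \<le> 8 * (S_all G (M * L) N t + S_all G (2 * M * L) N t
           + (\<Sum>p\<in>P. S_flat G M (N / real p) t / real p ^ 2))"
proof -
  define D where "D m N' = norm (dpoly G m N' t) ^ 4" for m N'
  have image_bound: "(\<Sum>m\<in>dyadic_fund_discs M. \<Sum>p\<in>P. D (m * int p ^ 2) N)
      \<le> S_all G (M * L) N t + S_all G (2 * M * L) N t"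
    unfolding S_all_eq_sum D_def
    by (rule sum_dyadic_fund_discs_mult_prime_square_le) (use P \<open>finite P\<close> \<open>M \<ge> 0\<close> in auto)
  have swap: "(\<Sum>m\<in>dyadic_fund_discs M. \<Sum>p\<in>P. D m (N / p) / real p ^ 2)
      = (\<Sum>p\<in>P. S_flat G M (N / real p) t / real p ^ 2)"
    by (subst sum.swap) (simp add: S_flat_eq_sum D_def sum_divide_distrib)
  have "real (card P) * S_flat G M N t = (\<Sum>m\<in>dyadic_fund_discs M. \<Sum>p\<in>P. D m N)"
    by (simp add: S_flat_eq_sum D_def sum_distrib_left)
  also have "\<dots> \<le> (\<Sum>m\<in>dyadic_fund_discs M. \<Sum>p\<in>P. 8 * D (m * int p ^ 2) N + 8 * (D m (N / p) / real p ^ 2))"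
    unfolding D_def using norm_dpoly_pow4_le[where G = G, OF G N] P by (intro sum_mono) blast
  also have "\<dots> = 8 * ((\<Sum>m\<in>dyadic_fund_discs M. \<Sum>p\<in>P. D (m * int p ^ 2) N)
      + (\<Sum>m\<in>dyadic_fund_discs M. \<Sum>p\<in>P. D m (N / p) / real p ^ 2))"
    by (simp add: sum.distrib sum_distrib_left)
  also have "\<dots> \<le> 8 * (S_all G (M * L) N t + S_all G (2 * M * L) N t
      + (\<Sum>p\<in>P. S_flat G M (N / real p) t / real p ^ 2))"
    unfolding swap by (rule mult_left_mono[OF add_right_mono[OF image_bound]]) simp
  finally show ?thesis .
qed

lemma S_flat_nonneg: "S_flat G M N t \<ge> 0"
  by (simp add: S_flat_def sum_nonneg)

lemma sqrt_2_less_prime: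
  assumes "prime p"
  shows "sqrt 2 < real p"
proof -
  have "sqrt 2 < sqrt 4"
    by (rule real_sqrt_less_mono) simp
  also have "\<dots> = 2"
    by (rule real_sqrt_four)
  also have "\<dots> \<le> real p"
    using prime_ge_2_nat[OF assms] by simp
  finally show ?thesis .
qed

lemma finite_primes_sqrt_interval:
  "finite {p::nat. prime p \<and> sqrt L \<le> real p \<and> real p \<le> sqrt (2 * L)}"
proof (rule finite_subset)
  show "{p::nat. prime p \<and> sqrt L \<le> real p \<and> real p \<le> sqrt (2 * L)} \<subseteq> {..nat \<lceil>sqrt (2 * L)\<rceil>}"
    by (auto simp: le_nat_iff; linarith)
qed simp

lemma primes_sqrt_interval_square_bounds:
  assumes "p \<in> {p::nat. prime p \<and> sqrt L \<le> real p \<and> real p \<le> sqrt (2 * L)}"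
  shows "prime p \<and> L \<le> real p ^ 2 \<and> real p ^ 2 \<le> 2 * L"
  using assms sqrt_le_D[of L "real p"] sqrt_ge_absD[of "real p" "2 * L"] by auto

lemma S_flat_le_of_card_primes_gt:
  assumes G: "\<And>x. x > B \<Longrightarrow> G x = 0" and "L > 1" "M \<ge> 0" "N > 0"
    and card: "real (card {p::nat. prime p \<and> sqrt L \<le> real p \<and> real p \<le> sqrt (2 * L)})
      > sqrt L / (2 * ln L)"
  shows "S_flat G M N t \<le> 16 * (ln L / sqrt L) *
      (S_all G (M * L) N t + S_all G (2 * M * L) N t +
        (\<Sum>p\<in>{p::nat. prime p \<and> sqrt L \<le> real p \<and> real p \<le> sqrt (2 * L)}.
          S_flat G M (N / real p) t / real p ^ 2))"
    (is "_ \<le> _ * ?X")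
proof -
  define P where "P = {p::nat. prime p \<and> sqrt L \<le> real p \<and> real p \<le> sqrt (2 * L)}"
  have "sqrt L > 0" "ln L > 0"
    using \<open>L > 1\<close> by simp_all
  then have pos: "sqrt L / (2 * ln L) > 0"
    by simp
  have "S_flat G M N t * (sqrt L / (2 * ln L)) \<le> S_flat G M N t * real (card P)"
    using card unfolding P_def by (intro mult_left_mono S_flat_nonneg) simp_all
  also have "\<dots> \<le> 8 * ?X"
    unfolding P_def mult.commute[of "S_flat G M N t"] using G \<open>M \<ge> 0\<close> \<open>N > 0\<close>
    by (intro card_mult_S_flat_le finite_primes_sqrt_interval primes_sqrt_interval_square_bounds)
  finally have "S_flat G M N t \<le> 8 * ?X / (sqrt L / (2 * ln L))"
    using pos by (simp only: pos_le_divide_eq)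
  also have "\<dots> = 16 * (ln L / sqrt L) * ?X"
    using \<open>sqrt L > 0\<close> \<open>ln L > 0\<close> by (simp add: field_simps)
  finally show ?thesis .
qed

text \<open>Since \<open>ln 1 = 0\<close> and \<open>x / 0 = 0\<close>, the hypothesis fails at \<open>L = 1\<close>: it would say \<open>0 > 0\<close>.\<close>

lemma card_primes_sqrt_interval_bound_imp_gt_1:
  assumes "\<forall>L\<ge>L0. real (card {p::nat. prime p \<and> sqrt L \<le> real p \<and> real p \<le> sqrt (2 * L)})
      > sqrt L / (2 * ln L)"
  shows "L0 > 1"
proof (rule ccontr)
  assume "\<not> L0 > 1"
  have no_primes: "{p::nat. prime p \<and> sqrt 1 \<le> real p \<and> real p \<le> sqrt (2 * 1)} = {}"
    by (auto dest: sqrt_2_less_prime)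
  have "real (card ({} :: nat set)) > sqrt 1 / (2 * ln 1)"
    unfolding no_primes[symmetric] by (rule assms[rule_format]) (use \<open>\<not> L0 > 1\<close> in simp)
  then show False
    by simp
qed

theorem lemma3p1:
  fixes G :: "real \<Rightarrow> real"
  assumes "admissible_G G"
  shows "\<exists>C>0. \<forall>L0::real.
    (\<forall>L\<ge>L0. real (card {p::nat. prime p \<and> sqrt L \<le> real p \<and> real p \<le> sqrt (2 * L)}) > sqrt L / (2 * ln L)) \<longrightarrow>
    (\<forall>L\<ge>L0. \<forall>M N t. M > 0 \<longrightarrow> N > 0 \<longrightarrow>
       S_flat G M N t \<le> C * (ln L / sqrt L) *
         (S_all G (M * L) N t + S_all G (2 * M * L) N t +
          (\<Sum>p\<in>{p::nat. prime p \<and> sqrt L \<le> real p \<and> real p \<le> sqrt (2 * L)}.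
              S_flat G M (N / real p) t / real p ^ 2)))"
proof -
  have G: "G x = 0" if "x > 2" for x
    using assms that by (auto simp: admissible_G_def)
  show ?thesis
    by (intro exI[of _ 16] conjI allI impI S_flat_le_of_card_primes_gt[OF G])
      (auto dest: card_primes_sqrt_interval_bound_imp_gt_1)
qed

end
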